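(* Let $G=(V,E)$ be a connected graph and let $\Gamma(G)=\{G_\pi:\ \pi:E\to\{\pm1\},\ \rho(G_\pi)<\rho(G)\}$. Then $\Gamma(G)$ is empty if and only if $G$ is a tree or a unicyclic graph whose unique cycle has odd length.
   Context: All graphs are finite, simple and undirected. A signed graph $G_\pi$ is a pair $(G,\pi)$ with $\pi:E\to\{+1,-1\}$; its adjacency matrix has entry $\pi(\{i,j\})$ for adjacent $i,j$ and $0$ otherwise, and its eigenvalues are those of this symmetric matrix. $\rho(G_\pi)$ denotes the largest modulus of an eigenvalue of $G_\pi$, and $\rho(G)$ the spectral radius of the adjacency matrix of $G$. *)

theory Defs
  imports "HOL-Analysis.Analysis"
begin

definition simple_graph :: "('n \<Rightarrow> 'n \<Rightarrow> bool) \<Rightarrow> bool" where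
  "simple_graph adj \<longleftrightarrow> (\<forall>i j. adj i j \<longrightarrow> adj j i) \<and> (\<forall>i. \<not> adj i i)"

definition graph_connected :: "('n \<Rightarrow> 'n \<Rightarrow> bool) \<Rightarrow> bool" where
  "graph_connected adj \<longleftrightarrow> (\<forall>u v. adj\<^sup>*\<^sup>* u v)"

definition graph_edges :: "('n \<Rightarrow> 'n \<Rightarrow> bool) \<Rightarrow> 'n set set" where
  "graph_edges adj = {{i, j} | i j. adj i j}"

definition is_cycle :: "('n \<Rightarrow> 'n \<Rightarrow> bool) \<Rightarrow> 'n list \<Rightarrow> bool" where
  "is_cycle adj c \<longleftrightarrow> length c \<ge> 3 \<and> distinct c \<and>
     (\<forall>i < length c. adj (c ! i) (c ! ((i + 1) mod length c)))"

definition cycle_edge_set :: "'n list \<Rightarrow> 'n set set" where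
  "cycle_edge_set c = {{c ! i, c ! ((i + 1) mod length c)} | i. i < length c}"

text \<open>The cycles of the graph, identified as subgraphs via their edge sets.\<close>
definition graph_cycles :: "('n \<Rightarrow> 'n \<Rightarrow> bool) \<Rightarrow> 'n set set set" where
  "graph_cycles adj = {cycle_edge_set c | c. is_cycle adj c}"

definition is_tree :: "('n \<Rightarrow> 'n \<Rightarrow> bool) \<Rightarrow> bool" where
  "is_tree adj \<longleftrightarrow> graph_connected adj \<and> graph_cycles adj = {}"

definition odd_unicyclic :: "('n \<Rightarrow> 'n \<Rightarrow> bool) \<Rightarrow> bool" where
  "odd_unicyclic adj \<longleftrightarrow> graph_connected adj \<and>
     (\<exists>C. graph_cycles adj = {C} \<and> odd (card C))"

definition adj_matrix :: "('n::finite \<Rightarrow> 'n \<Rightarrow> bool) \<Rightarrow> real^'n^'n" where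
  "adj_matrix adj = (\<chi> i j. if adj i j then 1 else 0)"

text \<open>A signature pi : E -> {+1,-1}, represented as a function on 2-sets whose
  values on edges lie in {1,-1} (values off edges are irrelevant).\<close>
definition is_signature :: "('n \<Rightarrow> 'n \<Rightarrow> bool) \<Rightarrow> ('n set \<Rightarrow> real) \<Rightarrow> bool" where
  "is_signature adj \<pi> \<longleftrightarrow> (\<forall>e \<in> graph_edges adj. \<pi> e = 1 \<or> \<pi> e = -1)"

definition signed_adj_matrix :: "('n::finite \<Rightarrow> 'n \<Rightarrow> bool) \<Rightarrow> ('n set \<Rightarrow> real) \<Rightarrow> real^'n^'n" where
  "signed_adj_matrix adj \<pi> = (\<chi> i j. if adj i j then \<pi> {i, j} else 0)"

text \<open>Eigenvalues of a real matrix (real, which covers all eigenvalues for symmetric matrices).\<close>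
definition is_eigenvalue :: "real^'n^'n \<Rightarrow> real \<Rightarrow> bool" where
  "is_eigenvalue A mu \<longleftrightarrow> (\<exists>v. v \<noteq> 0 \<and> A *v v = mu *\<^sub>R v)"

definition spec_rad :: "real^'n^'n \<Rightarrow> real" where
  "spec_rad A = Max (abs ` {mu. is_eigenvalue A mu})"

end

theory Submission
  imports Defs "HOL-Library.Transitive_Closure_Table"
begin

text \<open>Entrywise \<open>|A\<^sub>\<pi> v| \<le> A |v|\<close>, so every eigenvalue \<open>\<mu>\<close> of \<open>A\<^sub>\<pi>\<close> satisfies
  \<open>|\<mu>| \<le> \<rho>(G)\<close> by the Rayleigh principle. If \<open>|\<mu>| = \<rho>(G)\<close>, then \<open>|v|\<close> maximises the Rayleigh
  quotient of \<open>A\<close>, hence is an eigenvector, hence nowhere zero because \<open>G\<close> is connected; equality in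
  the triangle inequality then gives \<open>\<pi>(ij) = sgn \<mu> sgn v\<^sub>i sgn v\<^sub>j\<close>, i.e. \<open>\<pi>\<close> is switching
  equivalent to \<open>+G\<close> or \<open>-G\<close>, whose spectral radius is \<open>\<rho>(G)\<close>. So \<open>\<Gamma>(G) = {}\<close> exactly when every
  signature switches to a constant one. By Harary's theorem a signature is balanced iff every cycle
  has positive sign: on a tree every signature is balanced, and on an odd-unicyclic graph \<open>\<pi>\<close> or
  \<open>-\<pi>\<close> is. Otherwise there is an even cycle, or two odd cycles with an edge on one but not the
  other, and negating that single edge gives a signature that switches to no constant one.\<close>

section \<open>Symmetric real matrices\<close>

lemma inner_matrix_vector_symmetric:
  fixes M :: "real^'n^'n"
  assumes "transpose M = M"
  shows "(M *v x) \<bullet> y = x \<bullet> (M *v y)"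
  by (metis assms dot_lmul_matrix transpose_matrix_vector)

text \<open>If the quadratic form of a symmetric matrix is bounded by \<open>l\<close> times the squared norm,
  equality at \<open>y\<close> forces \<open>y\<close> to be an eigenvector: moving from \<open>y\<close> in the direction
  \<open>w = M y - l y\<close> gains \<open>2t |w|\<^sup>2\<close> at first order, contradicting the bound for small \<open>t > 0\<close>.\<close>

lemma rayleigh_max_imp_eigenvector:
  fixes M :: "real^'n^'n"
  assumes symm: "transpose M = M"
    and bound: "\<And>z. z \<bullet> (M *v z) \<le> l * (z \<bullet> z)"
    and eq: "y \<bullet> (M *v y) = l * (y \<bullet> y)"
  shows "M *v y = l *\<^sub>R y"
proof -
  define w where "w = M *v y - l *\<^sub>R y"
  define K where "K = l * (w \<bullet> w) - w \<bullet> (M *v w)"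
  have first_order: "w \<bullet> (M *v y) - l * (y \<bullet> w) = w \<bullet> w"
    by (simp add: w_def inner_diff_left inner_diff_right inner_commute algebra_simps)
  have swap: "y \<bullet> (M *v w) = w \<bullet> (M *v y)"
    using inner_matrix_vector_symmetric[OF symm, of w y] by (simp add: inner_commute)
  have expansion: "2 * t * (w \<bullet> w) \<le> t\<^sup>2 * K" for t :: real
  proof -
    have "(y + t *\<^sub>R w) \<bullet> (M *v (y + t *\<^sub>R w)) =
        l * (y \<bullet> y) + 2 * t * (w \<bullet> w) + 2 * t * l * (y \<bullet> w) + t\<^sup>2 * (w \<bullet> (M *v w))"
      using swap first_order eq
      by (simp add: algebra_simps inner_add_left inner_add_right power2_eq_square)
    moreover have "(y + t *\<^sub>R w) \<bullet> (y + t *\<^sub>R w) = y \<bullet> y + 2 * t * (y \<bullet> w) + t\<^sup>2 * (w \<bullet> w)"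
      by (simp add: algebra_simps inner_add_left inner_add_right inner_commute power2_eq_square)
    ultimately show ?thesis
      using bound[of "y + t *\<^sub>R w"] by (simp add: K_def algebra_simps)
  qed
  have "w \<bullet> w = 0"
  proof (rule ccontr)
    assume "w \<bullet> w \<noteq> 0"
    then have ww: "w \<bullet> w > 0"
      by (simp add: order_less_le)
    define t where "t = (w \<bullet> w) / (\<bar>K\<bar> + 1)"
    have t: "t > 0"
      using ww by (simp add: t_def)
    have "2 * (w \<bullet> w) \<le> t * K"
      using expansion[of t] t by (simp add: power2_eq_square)
    also have "\<dots> \<le> t * \<bar>K\<bar>"
      using t by (simp add: mult_left_mono)
    also have "\<dots> < w \<bullet> w"
      using ww by (simp add: t_def field_simps)
    finally show False
      using ww by simp
  qed
  then show ?thesis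
    by (simp add: w_def)
qed

lemma symmetric_matrix_top_eigenvalue:
  fixes M :: "real^'n^'n"
  assumes "transpose M = M"
  obtains l x where "x \<noteq> 0" "M *v x = l *\<^sub>R x" "\<And>z. z \<bullet> (M *v z) \<le> l * (z \<bullet> z)"
proof -
  have "\<exists>x\<in>sphere 0 1. \<forall>y\<in>sphere 0 1. y \<bullet> (M *v y) \<le> x \<bullet> (M *v x)"
    by (rule continuous_attains_sup) (auto intro!: continuous_intros)
  then obtain x :: "real^'n" where x: "norm x = 1"
    and x_max: "\<And>y. norm y = 1 \<Longrightarrow> y \<bullet> (M *v y) \<le> x \<bullet> (M *v x)"
    by auto
  define l where "l = x \<bullet> (M *v x)"
  have bound: "z \<bullet> (M *v z) \<le> l * (z \<bullet> z)" for z
  proof (cases "z = 0")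
    case False
    define y where "y = (1 / norm z) *\<^sub>R z"
    have "y \<bullet> (M *v y) \<le> l"
      using False x_max[of y] by (simp add: y_def l_def)
    moreover have "y \<bullet> (M *v y) = (z \<bullet> (M *v z)) / (z \<bullet> z)"
      using False by (simp add: y_def matrix_vector_mult_scaleR power2_norm_eq_inner[symmetric]
          power2_eq_square)
    ultimately show ?thesis
      using False by (simp add: divide_le_eq)
  qed simp
  have "M *v x = l *\<^sub>R x"
    using x by (intro rayleigh_max_imp_eigenvector[OF assms bound])
      (simp add: l_def power2_norm_eq_inner[symmetric])
  with x bound show thesis
    by (intro that[of x]) auto
qed

lemma finite_eigenvalues_symmetric:
  fixes M :: "real^'n^'n"
  assumes symm: "transpose M = M"
  shows "finite {mu. is_eigenvalue M mu}"
proof -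
  define S where "S = {mu. is_eigenvalue M mu}"
  define f where "f mu = (SOME v. v \<noteq> 0 \<and> M *v v = mu *\<^sub>R v)" for mu
  have f: "f mu \<noteq> 0 \<and> M *v f mu = mu *\<^sub>R f mu" if "mu \<in> S" for mu
  proof -
    have "\<exists>v. v \<noteq> 0 \<and> M *v v = mu *\<^sub>R v"
      using that by (simp add: S_def is_eigenvalue_def)
    then show ?thesis
      unfolding f_def by (rule someI_ex)
  qed
  have orth: "f a \<bullet> f b = 0" if "a \<in> S" "b \<in> S" "a \<noteq> b" for a b
  proof -
    have "a * (f a \<bullet> f b) = (M *v f a) \<bullet> f b"
      using f[OF that(1)] by simp
    also have "\<dots> = f a \<bullet> (M *v f b)"
      by (rule inner_matrix_vector_symmetric[OF symm])
    also have "\<dots> = b * (f a \<bullet> f b)"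
      using f[OF that(2)] by simp
    finally show ?thesis
      using that(3) by simp
  qed
  have "inj_on f S"
    by (rule inj_onI) (metis f inner_eq_zero_iff orth)
  moreover have "independent (f ` S)"
    by (rule pairwise_orthogonal_independent) (use orth f in \<open>auto simp: pairwise_def orthogonal_def\<close>)
  then have "finite (f ` S)"
    using independent_bound by blast
  ultimately show ?thesis
    using finite_imageD S_def by blast
qed

lemma spec_rad_symmetric:
  fixes M :: "real^'n^'n"
  assumes "transpose M = M"
  shows spec_rad_ge_eigenvalue: "is_eigenvalue M mu \<Longrightarrow> \<bar>mu\<bar> \<le> spec_rad M"
    and spec_rad_attained: "\<exists>mu. is_eigenvalue M mu \<and> spec_rad M = \<bar>mu\<bar>"
proof -
  have fin: "finite (abs ` {mu. is_eigenvalue M mu})"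
    using finite_eigenvalues_symmetric[OF assms] by simp
  show "\<bar>mu\<bar> \<le> spec_rad M" if "is_eigenvalue M mu"
    unfolding spec_rad_def using that fin by (intro Max_ge) auto
  obtain l x where "x \<noteq> 0" "M *v x = l *\<^sub>R x"
    using symmetric_matrix_top_eigenvalue[OF assms] by blast
  then have "abs ` {mu. is_eigenvalue M mu} \<noteq> {}"
    by (auto simp: is_eigenvalue_def)
  then show "\<exists>mu. is_eigenvalue M mu \<and> spec_rad M = \<bar>mu\<bar>"
    using Max_in[OF fin] unfolding spec_rad_def by force
qed

section \<open>Signed adjacency matrices and switching\<close>

lemma adj_matrix_nth [simp]: "adj_matrix adj $ i $ j = (if adj i j then 1 else 0)"
  by (simp add: adj_matrix_def)

lemma signed_adj_matrix_nth [simp]: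
  "signed_adj_matrix adj p $ i $ j = (if adj i j then p {i, j} else 0)"
  by (simp add: signed_adj_matrix_def)

lemma transpose_adj_matrix: "simple_graph adj \<Longrightarrow> transpose (adj_matrix adj) = adj_matrix adj"
  by (auto simp: transpose_def vec_eq_iff simple_graph_def)

lemma transpose_signed_adj_matrix:
  assumes "simple_graph adj"
  shows "transpose (signed_adj_matrix adj p) = signed_adj_matrix adj p"
proof -
  have "adj j i = adj i j" for i j
    using assms by (auto simp: simple_graph_def)
  then show ?thesis
    unfolding transpose_def vec_eq_iff by (simp add: insert_commute)
qed

lemma abs_signature_edge:
  assumes "is_signature adj p" "adj i j"
  shows "\<bar>p {i, j}\<bar> = 1"
proof -
  have "p {i, j} = 1 \<or> p {i, j} = -1"
    using assms unfolding is_signature_def graph_edges_def by blast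
  then show ?thesis
    by auto
qed

definition balanced :: "('n \<Rightarrow> 'n \<Rightarrow> bool) \<Rightarrow> ('n set \<Rightarrow> real) \<Rightarrow> bool" where
  "balanced adj p \<longleftrightarrow> (\<exists>s. (\<forall>x. \<bar>s x\<bar> = 1) \<and> (\<forall>i j. adj i j \<longrightarrow> p {i, j} = s i * s j))"

text \<open>\<open>p\<close> is switching equivalent to the all-positive (\<open>c = 1\<close>) or the all-negative (\<open>c = -1\<close>)
  signature.\<close>

definition switching_constant :: "('n \<Rightarrow> 'n \<Rightarrow> bool) \<Rightarrow> ('n set \<Rightarrow> real) \<Rightarrow> bool" where
  "switching_constant adj p \<longleftrightarrow>
     (\<exists>s c. \<bar>c\<bar> = 1 \<and> (\<forall>x. \<bar>s x\<bar> = 1) \<and> (\<forall>i j. adj i j \<longrightarrow> p {i, j} = c * (s i * s j)))"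

lemma switching_constant_if_balanced:
  assumes "balanced adj p \<or> balanced adj (\<lambda>e. - p e)"
  shows "switching_constant adj p"
  using assms unfolding balanced_def switching_constant_def
proof (elim disjE exE conjE)
  fix s assume "\<forall>x. \<bar>s x\<bar> = 1" "\<forall>i j. adj i j \<longrightarrow> p {i, j} = s i * s j"
  then show "\<exists>s c. \<bar>c\<bar> = 1 \<and> (\<forall>x. \<bar>s x\<bar> = 1) \<and> (\<forall>i j. adj i j \<longrightarrow> p {i, j} = c * (s i * s j))"
    by (intro exI[of _ s] exI[of _ 1]) simp
next
  fix s assume "\<forall>x. \<bar>s x\<bar> = 1" "\<forall>i j. adj i j \<longrightarrow> - p {i, j} = s i * s j"
  then show "\<exists>s c. \<bar>c\<bar> = 1 \<and> (\<forall>x. \<bar>s x\<bar> = 1) \<and> (\<forall>i j. adj i j \<longrightarrow> p {i, j} = c * (s i * s j))"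
    by (intro exI[of _ s] exI[of _ "-1"]) (simp add: minus_equation_iff)
qed

lemma abs_eq_1_mult_self: "\<bar>x\<bar> = 1 \<Longrightarrow> x * x = (1::real)"
  by (auto simp: abs_if split: if_splits)

lemma is_eigenvalue_switching:
  fixes M N :: "real^'n^'n"
  assumes s: "\<forall>x. \<bar>s x\<bar> = 1" and c: "\<bar>c\<bar> = 1"
    and M: "\<forall>i j. M $ i $ j = c * (s i * s j) * N $ i $ j"
    and "is_eigenvalue N nu"
  shows "is_eigenvalue M (c * nu)"
proof -
  obtain v where v: "v \<noteq> 0" "N *v v = nu *\<^sub>R v"
    using assms(4) by (auto simp: is_eigenvalue_def)
  have ss: "s x * s x = 1" for x
    using s by (simp add: abs_eq_1_mult_self)
  define w where "w = (\<chi> i. s i * v $ i)"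
  have "s i \<noteq> 0" for i
    using s by (metis abs_zero zero_neq_one)
  then have "w \<noteq> 0"
    using v(1) by (auto simp: w_def vec_eq_iff)
  moreover have "(M *v w) $ i = ((c * nu) *\<^sub>R w) $ i" for i
  proof -
    have "(M *v w) $ i = (\<Sum>j\<in>UNIV. (c * s i) * (N $ i $ j * v $ j) * (s j * s j))"
      using M by (simp add: matrix_vector_mult_def w_def mult_ac)
    also have "\<dots> = (c * s i) * (N *v v) $ i"
      by (simp add: ss matrix_vector_mult_def sum_distrib_left)
    also have "\<dots> = ((c * nu) *\<^sub>R w) $ i"
      using v(2) by (simp add: w_def)
    finally show ?thesis .
  qed
  ultimately show ?thesis
    by (auto simp: is_eigenvalue_def vec_eq_iff)
qed

lemma spec_rad_switching_constant:
  assumes "switching_constant adj p"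
  shows "spec_rad (signed_adj_matrix adj p) = spec_rad (adj_matrix adj)"
proof -
  obtain s c where s: "\<forall>x. \<bar>s x\<bar> = 1" and c: "\<bar>c\<bar> = 1"
    and p: "\<forall>i j. adj i j \<longrightarrow> p {i, j} = c * (s i * s j)"
    using assms by (auto simp: switching_constant_def)
  have ss: "s x * s x = 1" "c * c = 1" for x
    using s c by (simp_all add: abs_eq_1_mult_self)
  define A where "A = adj_matrix adj"
  define B where "B = signed_adj_matrix adj p"
  have BA: "\<forall>i j. B $ i $ j = c * (s i * s j) * A $ i $ j"
    using p by (simp add: A_def B_def)
  have AB: "\<forall>i j. A $ i $ j = c * (s i * s j) * B $ i $ j"
  proof (intro allI)
    fix i j
    have "c * (s i * s j) * B $ i $ j = (c * c) * (s i * s i) * (s j * s j) * A $ i $ j"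
      using BA by (simp add: mult_ac)
    then show "A $ i $ j = c * (s i * s j) * B $ i $ j"
      by (simp add: ss)
  qed
  have "abs ` {mu. is_eigenvalue B mu} = abs ` {mu. is_eigenvalue A mu}"
  proof (intro equalityI image_subsetI)
    show "\<bar>mu\<bar> \<in> abs ` {mu. is_eigenvalue A mu}" if "mu \<in> {mu. is_eigenvalue B mu}" for mu
      using is_eigenvalue_switching[OF s c AB] that c by (intro image_eqI[of _ _ "c * mu"]) (auto simp: abs_mult)
    show "\<bar>mu\<bar> \<in> abs ` {mu. is_eigenvalue B mu}" if "mu \<in> {mu. is_eigenvalue A mu}" for mu
      using is_eigenvalue_switching[OF s c BA] that c by (intro image_eqI[of _ _ "c * mu"]) (auto simp: abs_mult)
  qed
  then show ?thesis
    by (simp add: spec_rad_def A_def B_def)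
qed

section \<open>Domination by the unsigned adjacency matrix\<close>

lemma signed_eigenvector_abs_le:
  assumes sig: "is_signature adj p" and ev: "signed_adj_matrix adj p *v v = mu *\<^sub>R v"
  shows "\<bar>mu\<bar> * \<bar>v $ i\<bar> \<le> (adj_matrix adj *v (\<chi> j. \<bar>v $ j\<bar>)) $ i"
proof -
  have "\<bar>mu\<bar> * \<bar>v $ i\<bar> = \<bar>\<Sum>j\<in>UNIV. signed_adj_matrix adj p $ i $ j * v $ j\<bar>"
  proof -
    have "(signed_adj_matrix adj p *v v) $ i = mu * v $ i"
      using ev by simp
    then show ?thesis
      by (simp add: matrix_vector_mult_def abs_mult)
  qed
  also have "\<dots> \<le> (\<Sum>j\<in>UNIV. \<bar>signed_adj_matrix adj p $ i $ j * v $ j\<bar>)"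
    by (rule sum_abs)
  also have "\<dots> = (adj_matrix adj *v (\<chi> j. \<bar>v $ j\<bar>)) $ i"
    unfolding matrix_vector_mult_def vec_lambda_beta using abs_signature_edge[OF sig]
    by (intro sum.cong refl) (simp add: abs_mult)
  finally show ?thesis .
qed

lemma signed_eigenvector_rayleigh:
  assumes "is_signature adj p" "signed_adj_matrix adj p *v v = mu *\<^sub>R v"
  defines "a \<equiv> \<chi> j. \<bar>v $ j\<bar>"
  shows "\<bar>mu\<bar> * (a \<bullet> a) \<le> a \<bullet> (adj_matrix adj *v a)"
proof -
  have "\<bar>mu\<bar> * (a \<bullet> a) = (\<Sum>i\<in>UNIV. a $ i * (\<bar>mu\<bar> * \<bar>v $ i\<bar>))"
    by (simp add: inner_vec_def a_def sum_distrib_left mult_ac)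
  also have "\<dots> \<le> (\<Sum>i\<in>UNIV. a $ i * (adj_matrix adj *v a) $ i)"
    using signed_eigenvector_abs_le[OF assms(1,2)]
    by (intro sum_mono mult_left_mono) (simp_all add: a_def)
  also have "\<dots> = a \<bullet> (adj_matrix adj *v a)"
    by (simp add: inner_vec_def)
  finally show ?thesis .
qed

lemma abs_signed_eigenvalue_le:
  assumes "is_signature adj p" "signed_adj_matrix adj p *v v = mu *\<^sub>R v" "v \<noteq> 0"
    and bound: "\<And>z. z \<bullet> (adj_matrix adj *v z) \<le> l * (z \<bullet> z)"
  shows "\<bar>mu\<bar> \<le> l"
proof -
  define a where "a = (\<chi> j. \<bar>v $ j\<bar>)"
  have "a \<bullet> a = v \<bullet> v"
    by (simp add: a_def inner_vec_def)
  then have "a \<bullet> a > 0"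
    using assms(3) by simp
  moreover have "\<bar>mu\<bar> * (a \<bullet> a) \<le> l * (a \<bullet> a)"
    using signed_eigenvector_rayleigh[OF assms(1,2)] bound[of a] by (simp add: a_def)
  ultimately show ?thesis
    by simp
qed

lemma adj_matrix_nonneg_eigenvector_pos:
  assumes conn: "graph_connected adj"
    and nonneg: "\<And>i. a $ i \<ge> 0" and "a \<noteq> 0"
    and eigen: "adj_matrix adj *v a = l *\<^sub>R a"
  shows "a $ i > 0"
proof -
  have zero_step: "a $ j = 0" if "a $ i = 0" "adj i j" for i j
  proof -
    have "(adj_matrix adj *v a) $ i = 0"
      using eigen that(1) by simp
    then have "(\<Sum>k\<in>UNIV. adj_matrix adj $ i $ k * a $ k) = 0"
      by (simp only: matrix_vector_mult_def vec_lambda_beta)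
    then have "adj_matrix adj $ i $ j * a $ j = 0"
      using nonneg by (subst (asm) sum_nonneg_eq_0_iff) auto
    then show ?thesis
      using that(2) by simp
  qed
  have "a $ k = 0" if "a $ i = 0" for k
    using conn[unfolded graph_connected_def, rule_format, of i k]
    by (induction rule: rtranclp_induct) (use that zero_step in blast)+
  then show ?thesis
    using nonneg[of i] \<open>a \<noteq> 0\<close> by (metis less_eq_real_def vec_eq_iff zero_index)
qed

lemma sum_abs_eq_imp_same_sign:
  fixes f :: "'a \<Rightarrow> real"
  assumes "finite S" "\<bar>sum f S\<bar> = (\<Sum>x\<in>S. \<bar>f x\<bar>)" "x \<in> S"
  shows "0 \<le> f x * sum f S"
proof (cases "sum f S \<ge> 0")
  case True
  then have "(\<Sum>x\<in>S. \<bar>f x\<bar> - f x) = 0"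
    using assms(2) by (simp add: sum_subtractf)
  then have "\<bar>f x\<bar> - f x = 0"
    using assms(1,3) by (subst (asm) sum_nonneg_eq_0_iff) auto
  then show ?thesis
    using True by (simp add: abs_eq_iff')
next
  case False
  then have "(\<Sum>x\<in>S. \<bar>f x\<bar> + f x) = 0"
    using assms(2) by (simp add: sum.distrib)
  then have "\<bar>f x\<bar> + f x = 0"
    using assms(1,3) by (subst (asm) sum_nonneg_eq_0_iff) auto
  then show ?thesis
    using False by (simp add: mult_nonpos_nonpos)
qed

lemma abs_eq_1_imp_eq_sgn: "\<bar>x\<bar> = 1 \<Longrightarrow> 0 < x * y \<Longrightarrow> x = sgn (y::real)"
  by (auto simp: abs_if zero_less_mult_iff split: if_splits)

lemma signed_eigenvector_tight_sign:
  assumes sig: "is_signature adj p" and ev: "signed_adj_matrix adj p *v v = mu *\<^sub>R v"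
    and tight: "\<bar>mu\<bar> * \<bar>v $ i\<bar> = (adj_matrix adj *v (\<chi> j. \<bar>v $ j\<bar>)) $ i"
    and "adj i j"
  shows "0 \<le> p {i, j} * (mu * (v $ i * v $ j))"
proof -
  let ?t = "\<lambda>k. signed_adj_matrix adj p $ i $ k * v $ k"
  have "(signed_adj_matrix adj p *v v) $ i = mu * v $ i"
    using ev by simp
  then have sum_t: "sum ?t UNIV = mu * v $ i"
    by (simp only: matrix_vector_mult_def vec_lambda_beta)
  have "\<bar>sum ?t UNIV\<bar> = (\<Sum>k\<in>UNIV. \<bar>?t k\<bar>)"
    unfolding sum_t abs_mult tight matrix_vector_mult_def vec_lambda_beta
    using abs_signature_edge[OF sig] by (intro sum.cong refl) (simp add: abs_mult)
  from sum_abs_eq_imp_same_sign[OF _ this] have "0 \<le> ?t j * sum ?t UNIV"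
    by simp
  then have "0 \<le> ?t j * (mu * v $ i)"
    by (simp only: sum_t)
  then show ?thesis
    using \<open>adj i j\<close> by (simp add: mult_ac)
qed

lemma abs_signed_eigenvalue_eq_imp_switching_constant:
  assumes sg: "simple_graph adj" and conn: "graph_connected adj" and sig: "is_signature adj p"
    and ev: "signed_adj_matrix adj p *v v = mu *\<^sub>R v" and "v \<noteq> 0"
    and bound: "\<And>z. z \<bullet> (adj_matrix adj *v z) \<le> l * (z \<bullet> z)"
    and top: "\<bar>mu\<bar> = l"
  shows "switching_constant adj p"
proof (cases "\<exists>i j. adj i j")
  case False
  then show ?thesis
    unfolding switching_constant_def by (intro exI[of _ "\<lambda>_. 1"] exI[of _ 1]) auto
next
  case True
  then obtain i0 j0 where edge: "adj i0 j0"
    by blast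
  define a where "a = (\<chi> j. \<bar>v $ j\<bar>)"
  have "a \<bullet> (adj_matrix adj *v a) = l * (a \<bullet> a)"
    using signed_eigenvector_rayleigh[OF sig ev] bound[of a] top by (simp add: a_def)
  then have eigen: "adj_matrix adj *v a = l *\<^sub>R a"
    by (rule rayleigh_max_imp_eigenvector[OF transpose_adj_matrix[OF sg] bound])
  have "a \<noteq> 0"
    using \<open>v \<noteq> 0\<close> by (auto simp: a_def vec_eq_iff)
  then have pos: "a $ i > 0" for i
    by (intro adj_matrix_nonneg_eigenvector_pos[OF conn _ _ eigen]) (simp add: a_def)
  have "a $ j0 \<le> (adj_matrix adj *v a) $ i0"
    unfolding matrix_vector_mult_def vec_lambda_beta
    using edge member_le_sum[of j0 UNIV "\<lambda>k. adj_matrix adj $ i0 $ k * a $ k"] pos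
    by (simp add: less_imp_le)
  then have "mu \<noteq> 0"
    using pos[of i0] pos[of j0] eigen top by auto
  have "p {i, j} = sgn mu * (sgn (v $ i) * sgn (v $ j))" if "adj i j" for i j
  proof -
    have "\<bar>mu\<bar> * \<bar>v $ i\<bar> = (adj_matrix adj *v a) $ i"
      using eigen top by (simp add: a_def)
    from signed_eigenvector_tight_sign[OF sig ev this[unfolded a_def] that]
    have "0 < p {i, j} * (mu * (v $ i * v $ j))"
      using pos[of i] pos[of j] \<open>mu \<noteq> 0\<close> abs_signature_edge[OF sig that]
      by (auto simp: a_def less_le)
    then have "p {i, j} = sgn (mu * (v $ i * v $ j))"
      using abs_signature_edge[OF sig that] by (intro abs_eq_1_imp_eq_sgn)
    then show ?thesis
      by (simp add: sgn_mult)
  qed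
  moreover have "\<bar>sgn mu\<bar> = 1" "\<bar>sgn (v $ i)\<bar> = 1" for i
    using \<open>mu \<noteq> 0\<close> pos[of i] by (auto simp: a_def)
  ultimately show ?thesis
    unfolding switching_constant_def
    by (intro exI[of _ "\<lambda>i. sgn (v $ i)"] exI[of _ "sgn mu"]) simp
qed

lemma spec_rad_signed_less:
  assumes sg: "simple_graph adj" and conn: "graph_connected adj" and sig: "is_signature adj p"
    and "\<not> switching_constant adj p"
  shows "spec_rad (signed_adj_matrix adj p) < spec_rad (adj_matrix adj)"
proof -
  obtain l x where "x \<noteq> 0" "adj_matrix adj *v x = l *\<^sub>R x"
    and bound: "\<And>z. z \<bullet> (adj_matrix adj *v z) \<le> l * (z \<bullet> z)"
    using symmetric_matrix_top_eigenvalue[OF transpose_adj_matrix[OF sg]] by blast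
  then have "\<bar>l\<bar> \<le> spec_rad (adj_matrix adj)"
    by (intro spec_rad_ge_eigenvalue[OF transpose_adj_matrix[OF sg]]) (auto simp: is_eigenvalue_def)
  moreover obtain mu where "is_eigenvalue (signed_adj_matrix adj p) mu"
    and rad: "spec_rad (signed_adj_matrix adj p) = \<bar>mu\<bar>"
    using spec_rad_attained[OF transpose_signed_adj_matrix[OF sg]] by blast
  then obtain v where "v \<noteq> 0" "signed_adj_matrix adj p *v v = mu *\<^sub>R v"
    by (auto simp: is_eigenvalue_def)
  then have "\<bar>mu\<bar> < l"
    using abs_signed_eigenvalue_le[OF sig _ _ bound]
      abs_signed_eigenvalue_eq_imp_switching_constant[OF sg conn sig _ _ bound] assms(4)
    by (meson order_less_le)
  ultimately show ?thesis
    using rad by linarith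
qed

section \<open>Cycle signs and Harary's theorem\<close>

definition cycle_sign :: "('n set \<Rightarrow> real) \<Rightarrow> 'n list \<Rightarrow> real" where
  "cycle_sign p c = (\<Prod>i<length c. p {c ! i, c ! ((i + 1) mod length c)})"

lemma rtrancl_path_nth: "rtrancl_path r x xs y \<Longrightarrow> i < length xs \<Longrightarrow> r ((x # xs) ! i) (xs ! i)"
proof (induction arbitrary: i rule: rtrancl_path.induct)
  case (step x y ys z)
  then show ?case
    by (cases i) auto
qed simp

lemma rtrancl_path_last: "rtrancl_path r x xs y \<Longrightarrow> last (x # xs) = y"
  by (induction rule: rtrancl_path.induct) auto

lemma prod_telescope_signs:
  fixes t :: "nat \<Rightarrow> real"
  assumes "\<And>i. \<bar>t i\<bar> = 1"
  shows "(\<Prod>i<m. t i * t (Suc i)) = t 0 * t m"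
proof (induction m)
  case 0
  show ?case
    using abs_eq_1_mult_self[OF assms] by simp
next
  case (Suc m)
  then show ?case
    using abs_eq_1_mult_self[OF assms, of m] by (simp add: mult_ac)
qed

lemma cycle_sign_path_closing_edge:
  assumes path: "rtrancl_path adj u xs v"
    and s: "\<And>x. \<bar>s x\<bar> = 1" and bal: "\<And>i j. adj i j \<Longrightarrow> p {i, j} = s i * s j"
  shows "cycle_sign p (u # xs) = s u * s v * p {v, u}"
proof -
  define c where "c = u # xs"
  define m where "m = length xs"
  have "cycle_sign p c = (\<Prod>i<m. p {c ! i, c ! Suc i}) * p {c ! m, c ! 0}"
    unfolding cycle_sign_def by (simp add: c_def m_def lessThan_Suc_atMost[symmetric])
  also have "(\<Prod>i<m. p {c ! i, c ! Suc i}) = (\<Prod>i<m. s (c ! i) * s (c ! Suc i))"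
    using rtrancl_path_nth[OF path] bal by (intro prod.cong) (simp_all add: c_def m_def)
  also have "\<dots> = s (c ! 0) * s (c ! m)"
    using s by (rule prod_telescope_signs)
  also have "c ! m = v"
    using rtrancl_path_last[OF path] last_conv_nth[of c] by (simp add: c_def m_def)
  finally show ?thesis
    by (simp add: c_def)
qed

lemma is_cycle_path_closing_edge:
  assumes path: "rtrancl_path adj' u xs v" and "distinct (u # xs)" "length xs \<ge> 2"
    and sub: "\<And>x y. adj' x y \<Longrightarrow> adj x y" and "adj v u"
  shows "is_cycle adj (u # xs)"
  unfolding is_cycle_def
proof (intro conjI allI impI)
  fix i
  assume i: "i < length (u # xs)"
  show "adj ((u # xs) ! i) ((u # xs) ! ((i + 1) mod length (u # xs)))"
  proof (cases "i < length xs")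
    case True
    then show ?thesis
      using sub rtrancl_path_nth[OF path True] by simp
  next
    case False
    then have "i = length xs"
      using i by simp
    moreover have "(u # xs) ! length xs = v"
      using rtrancl_path_last[OF path] last_conv_nth[of "u # xs"] by simp
    ultimately show ?thesis
      using \<open>adj v u\<close> by simp
  qed
qed (use assms in auto)

text \<open>Harary's lemma, edge by edge: if the endpoints of a new edge are already connected, the
  new edge closes a cycle, whose sign determines the sign of the edge.\<close>

lemma edge_sign_if_path_avoiding_edge:
  assumes path: "adj'\<^sup>*\<^sup>* u v" and "u \<noteq> v" "\<not> adj' u v" "adj v u"
    and sub: "\<And>x y. adj' x y \<Longrightarrow> adj x y"
    and s: "\<And>x. \<bar>s x\<bar> = 1" and bal: "\<And>i j. adj' i j \<Longrightarrow> p {i, j} = s i * s j"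
    and cycles: "\<And>c. is_cycle adj c \<Longrightarrow> cycle_sign p c = 1"
  shows "p {u, v} = s u * s v"
proof -
  obtain xs where xs: "rtrancl_path adj' u xs v" "distinct (u # xs)"
    using path unfolding rtranclp_eq_rtrancl_path by (metis rtrancl_path_distinct)
  have "xs \<noteq> []"
    using rtrancl_path_last[OF xs(1)] \<open>u \<noteq> v\<close> by auto
  moreover have "length xs \<noteq> 1"
  proof
    assume "length xs = 1"
    then have "xs = [v]"
      using rtrancl_path_last[OF xs(1)] by (cases xs) auto
    then show False
      using rtrancl_path_nth[OF xs(1), of 0] \<open>\<not> adj' u v\<close> by simp
  qed
  ultimately have "length xs \<ge> 2"
    by (cases xs) (auto simp: Suc_le_eq)
  with xs have "is_cycle adj (u # xs)"
    using sub \<open>adj v u\<close> by (intro is_cycle_path_closing_edge)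
  then have "cycle_sign p (u # xs) = 1"
    by (rule cycles)
  then have "s u * s v * p {u, v} = 1"
    using cycle_sign_path_closing_edge[where s = s and p = p, OF xs(1) s bal] by (simp add: insert_commute)
  then show ?thesis
    using abs_eq_1_mult_self[OF s, of u] abs_eq_1_mult_self[OF s, of v]
    by (metis mult.assoc mult.commute mult_1)
qed

text \<open>Otherwise the new edge is a bridge, and switching the component of \<open>v\<close> repairs its sign.\<close>

lemma balanced_insert_edge:
  assumes edges: "\<And>x y. adj x y \<longleftrightarrow> adj' x y \<or> {x, y} = {u, v}"
    and sym': "\<And>x y. adj' x y \<Longrightarrow> adj' y x"
    and s: "\<And>x. \<bar>s x\<bar> = 1" and bal: "\<And>i j. adj' i j \<Longrightarrow> p {i, j} = s i * s j"
    and uv: "\<bar>p {u, v}\<bar> = 1"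
    and sign_or_bridge: "p {u, v} = s u * s v \<or> \<not> adj'\<^sup>*\<^sup>* u v"
  shows "balanced adj p"
proof (cases "p {u, v} = s u * s v")
  case True
  have "p {i, j} = s i * s j" if "adj i j" for i j
    using that edges[of i j] bal True by (auto simp: doubleton_eq_iff insert_commute mult.commute)
  then show ?thesis
    using s unfolding balanced_def by blast
next
  case False
  then have puv: "p {u, v} = - (s u * s v)"
    using uv s[of u] s[of v] by (auto simp: abs_if split: if_splits)
  have "\<not> adj'\<^sup>*\<^sup>* v u"
    using False sign_or_bridge symp_rtranclp[of adj'] sym' by (metis sympD sympI)
  define s' where "s' x = (if adj'\<^sup>*\<^sup>* v x then - s x else s x)" for x
  have "p {i, j} = s' i * s' j" if "adj i j" for i j
  proof (cases "{i, j} = {u, v}")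
    case True
    then show ?thesis
      using puv \<open>\<not> adj'\<^sup>*\<^sup>* v u\<close> by (auto simp: doubleton_eq_iff s'_def insert_commute mult.commute)
  next
    case False
    then have "adj' i j"
      using that edges by blast
    then have "adj'\<^sup>*\<^sup>* v i \<longleftrightarrow> adj'\<^sup>*\<^sup>* v j"
      using sym' by (meson rtranclp.rtrancl_into_rtrancl)
    then show ?thesis
      using bal[OF \<open>adj' i j\<close>] by (simp add: s'_def)
  qed
  moreover have "\<bar>s' x\<bar> = 1" for x
    using s by (simp add: s'_def)
  ultimately show ?thesis
    unfolding balanced_def by blast
qed

lemma balanced_if_cycle_signs:
  fixes adj :: "'n::finite \<Rightarrow> 'n \<Rightarrow> bool"
  assumes "simple_graph adj" "\<And>i j. adj i j \<Longrightarrow> \<bar>p {i, j}\<bar> = 1"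
    and "\<And>c. is_cycle adj c \<Longrightarrow> cycle_sign p c = 1"
  shows "balanced adj p"
  using assms
proof (induction "card {(x, y). adj x y}" arbitrary: adj rule: less_induct)
  case less
  show ?case
  proof (cases "\<exists>u v. adj u v")
    case False
    then show ?thesis
      unfolding balanced_def by (intro exI[of _ "\<lambda>_. 1"]) simp
  next
    case True
    then obtain u v where uv: "adj u v"
      by blast
    have sym: "\<And>x y. adj x y \<Longrightarrow> adj y x" and "u \<noteq> v"
      using less.prems(1) uv by (auto simp: simple_graph_def)
    define adj' where "adj' x y \<longleftrightarrow> adj x y \<and> {x, y} \<noteq> {u, v}" for x y
    have sg': "simple_graph adj'"
      using less.prems(1) by (auto simp: simple_graph_def adj'_def insert_commute)
    have "{(x, y). adj' x y} \<subset> {(x, y). adj x y}"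
      using uv by (auto simp: adj'_def)
    then have "card {(x, y). adj' x y} < card {(x, y). adj x y}"
      by (intro psubset_card_mono) auto
    moreover have "cycle_sign p c = 1" if "is_cycle adj' c" for c
      using that less.prems(3) by (auto simp: is_cycle_def adj'_def)
    moreover have "\<bar>p {i, j}\<bar> = 1" if "adj' i j" for i j
      using that less.prems(2) by (simp add: adj'_def)
    ultimately have "balanced adj' p"
      using less.hyps[OF _ sg'] by blast
    then obtain s where s: "\<And>x. \<bar>s x\<bar> = 1" and bal: "\<And>i j. adj' i j \<Longrightarrow> p {i, j} = s i * s j"
      unfolding balanced_def by blast
    have "p {u, v} = s u * s v \<or> \<not> adj'\<^sup>*\<^sup>* u v"
      using edge_sign_if_path_avoiding_edge[where s = s and p = p, of adj' u v adj, OF _ \<open>u \<noteq> v\<close>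
          _ sym[OF uv] _ s bal less.prems(3)]
      by (auto simp: adj'_def)
    moreover have "adj x y \<longleftrightarrow> adj' x y \<or> {x, y} = {u, v}" for x y
      using uv sym by (auto simp: adj'_def doubleton_eq_iff)
    ultimately show ?thesis
      using balanced_insert_edge[where s = s and p = p, OF _ _ s bal] sg' less.prems(2)[OF uv]
      by (auto simp: simple_graph_def)
  qed
qed

lemma cycle_edge_set_eq_image:
  "cycle_edge_set c = (\<lambda>i. {c ! i, c ! ((i + 1) mod length c)}) ` {..<length c}"
  by (auto simp: cycle_edge_set_def)

lemma inj_on_cycle_edges:
  assumes "is_cycle adj c"
  shows "inj_on (\<lambda>i. {c ! i, c ! ((i + 1) mod length c)}) {..<length c}"
proof (rule inj_onI)
  define n where "n = length c"
  fix i j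
  assume "i \<in> {..<length c}" "j \<in> {..<length c}"
    and eq: "{c ! i, c ! ((i + 1) mod length c)} = {c ! j, c ! ((j + 1) mod length c)}"
  then have i: "i < n" and j: "j < n"
    by (auto simp: n_def)
  have n3: "n \<ge> 3"
    using assms by (simp add: is_cycle_def n_def)
  have index_eq: "a = b" if "a < n" "b < n" "c ! a = c ! b" for a b
    using assms that by (simp add: is_cycle_def n_def nth_eq_iff_index_eq)
  have mod_lt: "(k + 1) mod n < n" for k
    using n3 by simp
  have "c ! i = c ! j \<or> c ! i = c ! ((j + 1) mod n) \<and> c ! ((i + 1) mod n) = c ! j"
    using eq by (auto simp: doubleton_eq_iff n_def)
  then consider "i = j" | "i = (j + 1) mod n" "(i + 1) mod n = j"
    using index_eq[OF i j] index_eq[OF i mod_lt] index_eq[OF mod_lt j] by blast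
  then show "i = j"
  proof cases
    case 2
    have "i = ((i + 1) mod n + 1) mod n"
      using 2(1) unfolding 2(2)[symmetric] .
    then have "i = (i + 2) mod n"
      by (simp add: mod_Suc_eq)
    moreover have "(i + 2) mod n = (if i + 2 < n then i + 2 else i + 2 - n)"
      using i n3 by (simp add: mod_if)
    ultimately show ?thesis
      using n3 by (auto split: if_splits)
  qed
qed

lemma prod_cycle_edge_set:
  assumes "is_cycle adj c"
  shows "(\<Prod>e\<in>cycle_edge_set c. f e) = cycle_sign f c"
  unfolding cycle_edge_set_eq_image cycle_sign_def
  using prod.reindex[OF inj_on_cycle_edges[OF assms], of f] by (simp add: o_def)

lemma card_cycle_edge_set:
  assumes "is_cycle adj c"
  shows "card (cycle_edge_set c) = length c"
  unfolding cycle_edge_set_eq_image using card_image[OF inj_on_cycle_edges[OF assms]] by simp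

lemma prod_lessThan_rotate:
  fixes g :: "nat \<Rightarrow> 'a::comm_monoid_mult"
  assumes "n > 0"
  shows "(\<Prod>i<n. g ((i + 1) mod n)) = (\<Prod>i<n. g i)"
proof -
  obtain m where n: "n = Suc m"
    using assms by (cases n) auto
  have "(\<Prod>i<m. g ((i + 1) mod Suc m)) = (\<Prod>i<m. g (Suc i))"
    by (intro prod.cong) auto
  then have "(\<Prod>i<Suc m. g ((i + 1) mod Suc m)) = (\<Prod>i<m. g (Suc i)) * g 0"
    by simp
  also have "\<dots> = (\<Prod>i<Suc m. g i)"
    unfolding prod.lessThan_Suc_shift by (rule mult.commute)
  finally show ?thesis
    by (simp add: n)
qed

lemma cycle_sign_scale: "cycle_sign (\<lambda>e. a * p e) c = a ^ length c * cycle_sign p c"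
  by (simp add: cycle_sign_def prod.distrib)

lemma abs_cycle_sign:
  assumes "is_signature adj p" "is_cycle adj c"
  shows "\<bar>cycle_sign p c\<bar> = 1"
  using assms abs_signature_edge[OF assms(1)] unfolding cycle_sign_def is_cycle_def
  by (auto simp: abs_prod intro!: prod.neutral)

lemma cycle_sign_balanced:
  assumes "is_cycle adj c" and s: "\<And>x. \<bar>s x\<bar> = 1"
    and bal: "\<And>i j. adj i j \<Longrightarrow> p {i, j} = s i * s j"
  shows "cycle_sign p c = 1"
proof -
  define n where "n = length c"
  have "n > 0"
    using assms(1) by (auto simp: is_cycle_def n_def)
  have "cycle_sign p c = (\<Prod>i<n. s (c ! i) * s (c ! ((i + 1) mod n)))"
    using assms(1) bal unfolding cycle_sign_def is_cycle_def n_def[symmetric]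
    by (intro prod.cong) auto
  also have "\<dots> = (\<Prod>i<n. s (c ! i)) * (\<Prod>i<n. s (c ! i))"
    using prod_lessThan_rotate[OF \<open>n > 0\<close>, of "\<lambda>i. s (c ! i)"] by (simp add: prod.distrib)
  also have "\<dots> = 1"
    using s by (intro abs_eq_1_mult_self) (simp add: abs_prod)
  finally show ?thesis .
qed

lemma cycle_sign_switching:
  assumes "is_cycle adj cy" and s: "\<And>x. \<bar>s x\<bar> = 1" and "\<bar>c\<bar> = 1"
    and sw: "\<And>i j. adj i j \<Longrightarrow> p {i, j} = c * (s i * s j)"
  shows "cycle_sign p cy = c ^ length cy"
proof -
  have cc: "c * c = 1"
    using \<open>\<bar>c\<bar> = 1\<close> by (rule abs_eq_1_mult_self)
  have "cycle_sign (\<lambda>e. c * p e) cy = 1"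
    using sw cc by (intro cycle_sign_balanced[OF assms(1) s]) (simp add: mult.assoc[symmetric])
  then have "cycle_sign (\<lambda>e. c * (c * p e)) cy = c ^ length cy"
    by (simp only: cycle_sign_scale mult_1_right)
  then show ?thesis
    by (simp add: mult.assoc[symmetric] cc)
qed

section \<open>Trees and odd-unicyclic graphs\<close>

lemma switching_constant_if_tree_or_odd_unicyclic:
  fixes adj :: "'n::finite \<Rightarrow> 'n \<Rightarrow> bool"
  assumes sg: "simple_graph adj" and sig: "is_signature adj p"
    and "is_tree adj \<or> odd_unicyclic adj"
  shows "switching_constant adj p"
proof -
  have cycle_in: "cycle_edge_set c \<in> graph_cycles adj" if "is_cycle adj c" for c
    using that by (auto simp: graph_cycles_def)
  have "(\<forall>c. is_cycle adj c \<longrightarrow> cycle_sign p c = 1) \<or>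
      (\<forall>c. is_cycle adj c \<longrightarrow> cycle_sign (\<lambda>e. - p e) c = 1)"
  proof (cases "is_tree adj")
    case True
    then show ?thesis
      using cycle_in by (auto simp: is_tree_def)
  next
    case False
    then obtain C where C: "graph_cycles adj = {C}" "odd (card C)"
      using assms(3) by (auto simp: odd_unicyclic_def)
    then obtain c0 where c0: "is_cycle adj c0"
      by (auto simp: graph_cycles_def)
    have "cycle_sign f c = (\<Prod>e\<in>C. f e)" "odd (length c)" if "is_cycle adj c" for c f
      using cycle_in[OF that] C prod_cycle_edge_set[OF that] card_cycle_edge_set[OF that] by auto
    moreover have "\<bar>\<Prod>e\<in>C. p e\<bar> = 1"
      using abs_cycle_sign[OF sig c0] calculation(1)[OF c0] by simp
    ultimately show ?thesis
      using cycle_sign_scale[of "-1" p] by (auto simp: abs_if split: if_splits)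
  qed
  moreover have "\<bar>- p {i, j}\<bar> = 1" "\<bar>p {i, j}\<bar> = 1" if "adj i j" for i j
    using abs_signature_edge[OF sig that] by simp_all
  ultimately have "balanced adj p \<or> balanced adj (\<lambda>e. - p e)"
    using balanced_if_cycle_signs[OF sg, of p] balanced_if_cycle_signs[OF sg, of "\<lambda>e. - p e"]
    by auto
  then show ?thesis
    by (rule switching_constant_if_balanced)
qed

lemma cycle_sign_negate_edge:
  assumes "is_cycle adj c"
  shows "cycle_sign (\<lambda>x. if x = e then -1 else 1) c = (if e \<in> cycle_edge_set c then -1 else 1)"
  using prod_cycle_edge_set[OF assms, of "\<lambda>x. if x = e then -1 else 1"]
  by (simp add: prod.delta cycle_edge_set_eq_image)

lemma not_switching_constant_negate_edge:
  assumes c1: "is_cycle adj c1" and c2: "is_cycle adj c2" and e: "e \<in> cycle_edge_set c1"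
    and "e \<notin> cycle_edge_set c2 \<and> odd (length c2) \<or> c2 = c1 \<and> even (length c1)"
  shows "\<not> switching_constant adj (\<lambda>x. if x = e then -1 else 1)"
proof
  define p :: "'a set \<Rightarrow> real" where "p x = (if x = e then -1 else 1)" for x
  assume "switching_constant adj (\<lambda>x. if x = e then -1 else 1)"
  then obtain s c where s: "\<And>x. \<bar>s x\<bar> = 1" and c: "\<bar>c\<bar> = 1"
    and sw: "\<And>i j. adj i j \<Longrightarrow> p {i, j} = c * (s i * s j)"
    unfolding switching_constant_def p_def by auto
  have signs: "cycle_sign (\<lambda>x. if x = e then -1 else 1) cy = c ^ length cy" if "is_cycle adj cy" for cy
    using cycle_sign_switching[where s = s and p = p, OF that s c sw] by (simp add: p_def[abs_def])
  have "c ^ length c1 = -1"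
    using signs[OF c1] cycle_sign_negate_edge[OF c1] e by simp
  then have "c = -1" "odd (length c1)"
    using c by (auto simp: abs_if split: if_splits)
  then show False
    using assms(4) signs[OF c2] cycle_sign_negate_edge[OF c2] by auto
qed

lemma exists_signature_not_switching_constant:
  assumes "graph_connected adj" "\<not> is_tree adj" "\<not> odd_unicyclic adj"
  shows "\<exists>p. is_signature adj p \<and> \<not> switching_constant adj p"
proof -
  have cycle_in: "cycle_edge_set c \<in> graph_cycles adj" if "is_cycle adj c" for c
    using that by (auto simp: graph_cycles_def)
  have first_edge: "{c ! 0, c ! 1} \<in> cycle_edge_set c" if "is_cycle adj c" for c
    using that unfolding cycle_edge_set_def is_cycle_def by (intro CollectI exI[of _ 0]) auto
  obtain c where c: "is_cycle adj c"
    using assms(1,2) by (auto simp: is_tree_def graph_cycles_def)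
  have "\<exists>e c1 c2. is_cycle adj c1 \<and> is_cycle adj c2 \<and> e \<in> cycle_edge_set c1 \<and>
      (e \<notin> cycle_edge_set c2 \<and> odd (length c2) \<or> c2 = c1 \<and> even (length c1))"
  proof (cases "\<exists>c'. is_cycle adj c' \<and> even (length c')")
    case True
    then show ?thesis
      using first_edge by blast
  next
    case False
    have "graph_cycles adj \<noteq> {cycle_edge_set c}"
      using assms(1,3) False c card_cycle_edge_set[OF c] by (auto simp: odd_unicyclic_def)
    then obtain c' where c': "is_cycle adj c'" "cycle_edge_set c' \<noteq> cycle_edge_set c"
      using cycle_in[OF c] by (auto simp: graph_cycles_def)
    then have "(\<exists>e\<in>cycle_edge_set c. e \<notin> cycle_edge_set c') \<or>
        (\<exists>e\<in>cycle_edge_set c'. e \<notin> cycle_edge_set c)"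
      by blast
    then show ?thesis
      using False c c' by blast
  qed
  then obtain e c1 c2 where "is_cycle adj c1" "is_cycle adj c2" "e \<in> cycle_edge_set c1"
    "e \<notin> cycle_edge_set c2 \<and> odd (length c2) \<or> c2 = c1 \<and> even (length c1)"
    by blast
  then have "\<not> switching_constant adj (\<lambda>x. if x = e then -1 else 1)"
    by (rule not_switching_constant_negate_edge)
  moreover have "is_signature adj (\<lambda>x. if x = e then -1 else 1)"
    by (simp add: is_signature_def)
  ultimately show ?thesis
    by blast
qed

theorem mainTheorem2:
  fixes adj :: "'n::finite \<Rightarrow> 'n \<Rightarrow> bool"
  assumes "simple_graph adj"
    and "graph_connected adj"
  shows "(\<not> (\<exists>\<pi>. is_signature adj \<pi> \<and>
              spec_rad (signed_adj_matrix adj \<pi>) < spec_rad (adj_matrix adj)))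
         \<longleftrightarrow> (is_tree adj \<or> odd_unicyclic adj)"
proof
  assume no_smaller: "\<not> (\<exists>\<pi>. is_signature adj \<pi> \<and>
              spec_rad (signed_adj_matrix adj \<pi>) < spec_rad (adj_matrix adj))"
  show "is_tree adj \<or> odd_unicyclic adj"
  proof (rule ccontr)
    assume "\<not> (is_tree adj \<or> odd_unicyclic adj)"
    then obtain p where "is_signature adj p" "\<not> switching_constant adj p"
      using exists_signature_not_switching_constant[OF assms(2)] by blast
    then show False
      using no_smaller spec_rad_signed_less[OF assms] by blast
  qed
next
  assume tree_or_odd: "is_tree adj \<or> odd_unicyclic adj"
  show "\<not> (\<exists>\<pi>. is_signature adj \<pi> \<and>
              spec_rad (signed_adj_matrix adj \<pi>) < spec_rad (adj_matrix adj))"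
    using switching_constant_if_tree_or_odd_unicyclic[OF assms(1) _ tree_or_odd]
      spec_rad_switching_constant by (metis order_less_irrefl)
qed

end
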